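(* Let $f : \{0, 1\}^n \to \{0, 1\}$ be a symmetric Boolean function. Then $\mathsf{NAADT}(f) = O(\mathsf{D}_{\mathrm{cc}}(f \circ \mathsf{AND})^2)$.
   Context: $f$ is symmetric if $f(x)$ depends only on the Hamming weight of $x$. For $S\subseteq[n]$, $\mathsf{AND}_S(x)=\prod_{i\in S}x_i$. $\mathsf{NAADT}(f)$ (non-adaptive AND decision tree complexity) is the minimum $k$ for which there exist $S_1,\dots,S_k\subseteq[n]$ such that $f(x)$ is determined by the values $\mathsf{AND}_{S_1}(x),\dots,\mathsf{AND}_{S_k}(x)$ for all $x\in\{0,1\}^n$. $f\circ\mathsf{AND}$ is the two-party function $(x,y)\mapsto f(x_1\wedge y_1,\dots,x_n\wedge y_n)$ with Alice holding $x$, Bob holding $y$, and $\mathsf{D}_{\mathrm{cc}}$ is deterministic (two-way) communication complexity. *)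

theory Defs
  imports Complex_Main
begin

text \<open>Inputs in {0,1}^n are bool lists of length n (True = 1).\<close>

definition symmetric_fn :: "nat \<Rightarrow> (bool list \<Rightarrow> bool) \<Rightarrow> bool" where
  "symmetric_fn n f \<longleftrightarrow> (\<forall>x y. length x = n \<longrightarrow> length y = n \<longrightarrow>
      count_list x True = count_list y True \<longrightarrow> f x = f y)"

definition AND_S :: "nat set \<Rightarrow> bool list \<Rightarrow> bool" where
  "AND_S S x \<longleftrightarrow> (\<forall>i\<in>S. x ! i)"

definition NAADT :: "nat \<Rightarrow> (bool list \<Rightarrow> bool) \<Rightarrow> nat" where
  "NAADT n f = (LEAST k. \<exists>Ss :: nat set list. length Ss = k \<and> (\<forall>S\<in>set Ss. S \<subseteq> {..<n}) \<and>
      (\<forall>x y. length x = n \<longrightarrow> length y = n \<longrightarrow>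
         map (\<lambda>S. AND_S S x) Ss = map (\<lambda>S. AND_S S y) Ss \<longrightarrow> f x = f y))"

datatype ('a, 'b) protocol =
    Leaf bool
  | AliceNode "'a \<Rightarrow> bool" "('a, 'b) protocol" "('a, 'b) protocol"
  | BobNode "'b \<Rightarrow> bool" "('a, 'b) protocol" "('a, 'b) protocol"

fun run_protocol :: "('a, 'b) protocol \<Rightarrow> 'a \<Rightarrow> 'b \<Rightarrow> bool" where
  "run_protocol (Leaf v) x y = v"
| "run_protocol (AliceNode g P0 P1) x y = run_protocol (if g x then P1 else P0) x y"
| "run_protocol (BobNode g P0 P1) x y = run_protocol (if g y then P1 else P0) x y"

fun protocol_depth :: "('a, 'b) protocol \<Rightarrow> nat" where
  "protocol_depth (Leaf v) = 0"
| "protocol_depth (AliceNode g P0 P1) = Suc (max (protocol_depth P0) (protocol_depth P1))"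
| "protocol_depth (BobNode g P0 P1) = Suc (max (protocol_depth P0) (protocol_depth P1))"

definition Dcc :: "'a set \<Rightarrow> 'b set \<Rightarrow> ('a \<Rightarrow> 'b \<Rightarrow> bool) \<Rightarrow> nat" where
  "Dcc A B F = (LEAST d. \<exists>P :: ('a, 'b) protocol. protocol_depth P = d \<and>
      (\<forall>x\<in>A. \<forall>y\<in>B. run_protocol P x y = F x y))"

definition compose_AND :: "(bool list \<Rightarrow> bool) \<Rightarrow> bool list \<Rightarrow> bool list \<Rightarrow> bool" where
  "compose_AND f x y = f (map2 (\<and>) x y)"

definition Dcc_AND :: "nat \<Rightarrow> (bool list \<Rightarrow> bool) \<Rightarrow> nat" where
  "Dcc_AND n f = Dcc {x. length x = n} {y. length y = n} (compose_AND f)"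

end

theory Submission
  imports Defs "HOL-Computational_Algebra.Polynomial" "HOL-Library.FuncSet" "HOL-Library.Log_Nat"
begin

text \<open>Write \<open>f x = g |x|\<close> and let \<open>s\<close> be the first jump of \<open>g\<close>; then \<open>f\<close> is constant on
  inputs with more than \<open>d = n - s - 1\<close> zeros, and on the others it is determined by the zero
  set, which the queries of a \<open>d\<close>-disjunct family reveal. Such families of size
  \<open>2 (d \<lceil>log n\<rceil>)\<^sup>2\<close> come from the Kautz--Singleton construction over a greedy code.

  Conversely, a protocol of cost \<open>D\<close> writes \<open>g (|x \<and> y|)\<close> as a sum of \<open>2 ^ D\<close> rank-one
  matrices, while a nonzero \<open>k\<close>-th forward difference of \<open>g\<close> at \<open>s'\<close> yields a submatrix of
  rank \<open>(n - s') choose k\<close>. The difference of order \<open>s + 1\<close> at \<open>0\<close> gives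
  \<open>n choose d \<le> 2 ^ D\<close>; since \<open>g\<close> is 0/1-valued, some difference of order about \<open>d / 4\<close>
  at \<open>s\<close> is nonzero, giving \<open>d < 4 D\<close>. Together these bound \<open>d \<lceil>log n\<rceil>\<close> by \<open>4 D\<close>.\<close>

section \<open>Forward differences\<close>

fun forward_diff :: "nat \<Rightarrow> (nat \<Rightarrow> 'a::ab_group_add) \<Rightarrow> nat \<Rightarrow> 'a" where
  "forward_diff 0 G s = G s"
| "forward_diff (Suc k) G s = forward_diff k G (Suc s) - forward_diff k G s"

lemma forward_diff_after_constant:
  assumes "1 \<le> k" and "\<And>j. s \<le> j \<Longrightarrow> j < s + k \<Longrightarrow> G j = c"
  shows "forward_diff k G s = G (s + k) - c"
  using assms
proof (induction k arbitrary: s)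
  case 0
  then show ?case by simp
next
  case (Suc k)
  show ?case
  proof (cases "k = 0")
    case True
    then show ?thesis using Suc.prems by simp
  next
    case False
    have "forward_diff k G (Suc s) = G (Suc s + k) - c"
      using Suc.IH[of "Suc s"] Suc.prems False by auto
    moreover have "forward_diff k G s = G (s + k) - c"
      using Suc.IH[of s] Suc.prems False by auto
    moreover have "G (s + k) = c" using Suc.prems False by auto
    ultimately show ?thesis by simp
  qed
qed

lemma newton_forward_expansion:
  fixes G :: "nat \<Rightarrow> 'a::comm_ring_1"
  shows "G (s + j) = (\<Sum>k\<le>j. of_nat (j choose k) * forward_diff k G s)"
proof (induction j arbitrary: s)
  case 0
  then show ?case by simp
next
  case (Suc j)
  let ?\<Delta> = "\<lambda>k. forward_diff k G s"
  have "G (s + Suc j) = (\<Sum>k\<le>j. of_nat (j choose k) * forward_diff k G (Suc s))"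
    using Suc.IH[of "Suc s"] by simp
  also have "\<dots> = (\<Sum>k\<le>j. of_nat (j choose k) * ?\<Delta> (Suc k))
                 + (\<Sum>k\<le>j. of_nat (j choose k) * ?\<Delta> k)"
  proof -
    have "\<And>k. forward_diff k G (Suc s) = ?\<Delta> (Suc k) + ?\<Delta> k" by simp
    then show ?thesis by (simp only: distrib_left sum.distrib)
  qed
  also have "(\<Sum>k\<le>j. of_nat (j choose k) * ?\<Delta> k)
           = ?\<Delta> 0 + (\<Sum>k\<le>j. of_nat (j choose Suc k) * ?\<Delta> (Suc k))"
    using sum.atMost_Suc_shift[of "\<lambda>k. of_nat (j choose k) * ?\<Delta> k" j]
    by (simp add: binomial_eq_0 del: forward_diff.simps)
  also have "(\<Sum>k\<le>j. of_nat (j choose k) * ?\<Delta> (Suc k))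
             + (?\<Delta> 0 + (\<Sum>k\<le>j. of_nat (j choose Suc k) * ?\<Delta> (Suc k)))
           = ?\<Delta> 0 + (\<Sum>k\<le>j. of_nat (Suc j choose Suc k) * ?\<Delta> (Suc k))"
    by (simp add: sum.distrib[symmetric] algebra_simps del: forward_diff.simps)
  also have "\<dots> = (\<Sum>k\<le>Suc j. of_nat (Suc j choose k) * ?\<Delta> k)"
    by (subst sum.atMost_Suc_shift) (simp del: forward_diff.simps)
  finally show ?case .
qed

definition binomial_poly :: "nat \<Rightarrow> 'a::field_char_0 poly" where
  "binomial_poly k = smult (1 / fact k) (\<Prod>i<k. [:- of_nat i, 1:])"

lemma poly_binomial_poly: "poly (binomial_poly k) (of_nat j) = (of_nat (j choose k) :: 'a::field_char_0)"
proof -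
  have "poly (binomial_poly k) (of_nat j) = (\<Prod>i<k. of_nat j - of_nat i) / (fact k :: 'a)"
    by (simp add: binomial_poly_def poly_prod)
  also have "\<dots> = (of_nat j :: 'a) gchoose k"
    by (simp add: gbinomial_prod_rev atLeast0LessThan)
  also have "\<dots> = of_nat (j choose k)" by (simp add: binomial_gbinomial)
  finally show ?thesis .
qed

lemma degree_binomial_poly_le: "degree (binomial_poly k :: 'a::field_char_0 poly) \<le> k"
proof -
  have "degree (\<Prod>i<k. [:- of_nat i, 1::'a:]) \<le> (\<Sum>i<k. degree [:- of_nat i, 1::'a:])"
    using degree_prod_sum_le[of "{..<k}" "\<lambda>i. [:- of_nat i, 1::'a:]"] by (simp add: o_def)
  also have "\<dots> = k" by simp
  finally show ?thesis
    unfolding binomial_poly_def using degree_smult_le order_trans by blast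
qed

text \<open>If the differences of orders \<open>K..L\<close> all vanished, the Newton interpolant of degree
  below \<open>K\<close> would agree with the 0/1-valued \<open>G\<close> at \<open>s, \<dots>, s + L\<close>; then \<open>P (P - 1)\<close>, of
  degree at most \<open>L\<close>, has \<open>L + 1\<close> roots, so \<open>P\<close> is constant, contradicting the jump at \<open>s\<close>.\<close>

lemma forward_diff_nonzero_in_window:
  fixes G :: "nat \<Rightarrow> 'a::field_char_0"
  assumes binary: "\<And>j. j \<le> L \<Longrightarrow> G (s + j) \<in> {0, 1}"
    and jump: "G s \<noteq> G (Suc s)" and "1 \<le> L" and "2 * K \<le> L + 2"
  shows "\<exists>k. K \<le> k \<and> k \<le> L \<and> forward_diff k G s \<noteq> 0"
proof (rule ccontr)
  assume "\<not> ?thesis"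
  then have vanish: "\<And>k. K \<le> k \<Longrightarrow> k \<le> L \<Longrightarrow> forward_diff k G s = 0" by auto
  define P where "P = (\<Sum>k<K. smult (forward_diff k G s) (binomial_poly k))"
  have poly_P: "poly P (of_nat j) = G (s + j)" if "j \<le> L" for j
  proof -
    have "poly P (of_nat j) = (\<Sum>k<K. of_nat (j choose k) * forward_diff k G s)"
      by (simp add: P_def poly_sum poly_binomial_poly mult.commute)
    also have "\<dots> = (\<Sum>k \<in> {..<K} \<inter> {..j}. of_nat (j choose k) * forward_diff k G s)"
      by (rule sum.mono_neutral_right) auto
    also have "\<dots> = (\<Sum>k\<le>j. of_nat (j choose k) * forward_diff k G s)"
      by (rule sum.mono_neutral_left) (use that vanish in \<open>force+\<close>)
    also have "\<dots> = G (s + j)" by (rule newton_forward_expansion[symmetric])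
    finally show ?thesis .
  qed
  have degree_P: "degree P \<le> K - 1"
    unfolding P_def
  proof (rule degree_sum_le)
    fix k assume "k \<in> {..<K}"
    then show "degree (smult (forward_diff k G s) (binomial_poly k)) \<le> K - 1"
      using degree_smult_le[of "forward_diff k G s" "binomial_poly k :: 'a poly"]
        degree_binomial_poly_le[of k, where 'a='a] by fastforce
  qed simp
  define Q where "Q = P * (P - 1)"
  have roots: "of_nat ` {0..L} \<subseteq> {x. poly Q x = 0}"
  proof
    fix x :: 'a assume "x \<in> of_nat ` {0..L}"
    then obtain j where "j \<le> L" "x = of_nat j" by auto
    then show "x \<in> {x. poly Q x = 0}" using poly_P binary by (force simp: Q_def)
  qed
  have "P = 0 \<or> P = 1"
  proof (rule ccontr)
    assume "\<not> (P = 0 \<or> P = 1)"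
    then have "Q \<noteq> 0" by (simp add: Q_def)
    have "degree Q \<le> degree P + degree (P - 1)"
      unfolding Q_def by (rule degree_mult_le)
    also have "degree (P - 1) \<le> degree P" using degree_diff_le_max[of P 1] by simp
    finally have "degree Q \<le> L" using degree_P \<open>2 * K \<le> L + 2\<close> by linarith
    have "L + 1 = card (of_nat ` {0..L} :: 'a set)"
      by (subst card_image) (auto simp: inj_on_def)
    also have "\<dots> \<le> card {x. poly Q x = 0}"
      by (rule card_mono[OF poly_roots_finite[OF \<open>Q \<noteq> 0\<close>] roots])
    also have "\<dots> \<le> degree Q" by (rule card_poly_roots_bound[OF \<open>Q \<noteq> 0\<close>])
    finally show False using \<open>degree Q \<le> L\<close> by simp
  qed
  then have "poly P (of_nat 0) = poly P (of_nat 1)" by auto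
  then show False using poly_P[of 0] poly_P[of 1] \<open>1 \<le> L\<close> jump by simp
qed

lemma sum_Pow_insert:
  assumes "finite S" and "e \<notin> S"
  shows "(\<Sum>X\<in>Pow (insert e S). h X) = (\<Sum>X\<in>Pow S. h X) + (\<Sum>X\<in>Pow S. h (insert e X))"
proof -
  have inj: "inj_on (insert e) (Pow S)"
    using assms(2) by (auto simp: inj_on_def)
  have "(\<Sum>X\<in>Pow (insert e S). h X) = (\<Sum>X\<in>Pow S \<union> insert e ` Pow S. h X)"
    by (simp add: Pow_insert)
  also have "\<dots> = (\<Sum>X\<in>Pow S. h X) + (\<Sum>X\<in>insert e ` Pow S. h X)"
    by (rule sum.union_disjoint) (use assms in auto)
  also have "(\<Sum>X\<in>insert e ` Pow S. h X) = (\<Sum>X\<in>Pow S. h (insert e X))"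
    by (rule sum.reindex[OF inj, unfolded o_def])
  finally show ?thesis .
qed

lemma forward_diff_eq_sum_Pow:
  fixes G :: "nat \<Rightarrow> 'a::comm_ring_1"
  assumes "finite S"
  shows "forward_diff (card S) G s = (\<Sum>X\<in>Pow S. (-1)^(card S - card X) * G (s + card X))"
  using assms
proof (induction S arbitrary: s rule: finite_induct)
  case empty
  then show ?case by simp
next
  case (insert e S)
  let ?c = "card (insert e S)"
  have "(\<Sum>X\<in>Pow S. (-1)^(?c - card X) * G (s + card X))
      = (\<Sum>X\<in>Pow S. - ((-1)^(card S - card X) * G (s + card X)))"
  proof (rule sum.cong)
    fix X assume "X \<in> Pow S"
    then have "card X \<le> card S" using insert(1) by (simp add: card_mono)
    then have "?c - card X = Suc (card S - card X)" using insert by simp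
    then show "(-1)^(?c - card X) * G (s + card X) = - ((-1)^(card S - card X) * G (s + card X))"
      by simp
  qed simp
  also have "\<dots> = - forward_diff (card S) G s" using insert.IH[of s] by (simp add: sum_negf)
  finally have without_e: "(\<Sum>X\<in>Pow S. (-1)^(?c - card X) * G (s + card X))
      = - forward_diff (card S) G s" .
  have "(\<Sum>X\<in>Pow S. (-1)^(?c - card (insert e X)) * G (s + card (insert e X)))
      = (\<Sum>X\<in>Pow S. (-1)^(card S - card X) * G (Suc s + card X))"
  proof (rule sum.cong)
    fix X assume "X \<in> Pow S"
    then have "finite X" "e \<notin> X" using insert finite_subset by auto
    then show "(-1)^(?c - card (insert e X)) * G (s + card (insert e X))
        = (-1)^(card S - card X) * G (Suc s + card X)"
      using insert by simp
  qed simp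
  also have "\<dots> = forward_diff (card S) G (Suc s)" using insert.IH[of "Suc s"] by simp
  finally have with_e: "(\<Sum>X\<in>Pow S. (-1)^(?c - card (insert e X)) * G (s + card (insert e X)))
      = forward_diff (card S) G (Suc s)" .
  show ?case
    using sum_Pow_insert[OF insert(1,2), of "\<lambda>X. (-1)^(?c - card X) * G (s + card X)"]
      without_e with_e insert
    by simp
qed

lemma alternating_sum_Pow_eq_0:
  fixes H :: "'a set \<Rightarrow> 'b::comm_ring_1"
  assumes "finite S" and "e \<in> S" and "e \<notin> T"
  shows "(\<Sum>X\<in>Pow S. (-1)^(card S - card X) * H (X \<inter> T)) = 0"
proof -
  define S0 where "S0 = S - {e}"
  have S0: "S = insert e S0" "e \<notin> S0" "finite S0" using assms by (auto simp: S0_def)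
  have card_S: "card S = Suc (card S0)" using S0 by simp
  have "(\<Sum>X\<in>Pow S. (-1)^(card S - card X) * H (X \<inter> T))
      = (\<Sum>X\<in>Pow S0. (-1)^(card S - card X) * H (X \<inter> T)
                     + (-1)^(card S - card (insert e X)) * H (insert e X \<inter> T))"
    using sum_Pow_insert[OF S0(3,2)] S0(1) by (simp add: sum.distrib)
  also have "\<dots> = (\<Sum>X\<in>Pow S0. 0)"
  proof (rule sum.cong)
    fix X assume "X \<in> Pow S0"
    then have X: "finite X" "e \<notin> X" "card X \<le> card S0"
      using S0 finite_subset card_mono by auto
    have "insert e X \<inter> T = X \<inter> T" using assms(3) by auto
    moreover have "card S - card X = Suc (card S0 - card X)"
      and "card S - card (insert e X) = card S0 - card X"
      using card_S X by simp_all
    ultimately show "(-1)^(card S - card X) * H (X \<inter> T)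
        + (-1)^(card S - card (insert e X)) * H (insert e X \<inter> T) = 0"
      by simp
  qed simp
  finally show ?thesis by simp
qed

text \<open>A jump at distance \<open>t\<close> from the end forces a nonzero difference of order about \<open>t / 4\<close>,
  and \<open>t choose k \<ge> 2 ^ k\<close> for \<open>2 k \<le> t\<close>.\<close>

lemma jump_distance_to_end_le:
  fixes G :: "nat \<Rightarrow> real"
  assumes binary: "\<And>w. G w \<in> {0, 1}" and jump: "G s \<noteq> G (Suc s)" and "1 \<le> D"
    and rank: "\<And>k. s + k \<le> n \<Longrightarrow> forward_diff k G s \<noteq> 0 \<Longrightarrow> (n - s) choose k \<le> 2 ^ D"
  shows "n - s \<le> 4 * D"
proof (cases "n - s < 4")
  case True
  then show ?thesis using \<open>1 \<le> D\<close> by simp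
next
  case False
  define t where "t = n - s"
  have "1 \<le> t div 4" using False div_le_mono[of 4 t 4] by (simp add: t_def)
  then obtain k where k: "t div 4 + 1 \<le> k" "k \<le> 2 * (t div 4)" and nonzero: "forward_diff k G s \<noteq> 0"
    using forward_diff_nonzero_in_window[of "2 * (t div 4)" G s "t div 4 + 1"] binary jump
    by auto
  then have "2 * k \<le> t" "1 \<le> k" by simp_all
  have "(2::real) ^ k \<le> (real t / real k) ^ k"
    using \<open>2 * k \<le> t\<close> \<open>1 \<le> k\<close> by (intro power_mono) (auto simp: field_simps)
  also have "\<dots> \<le> real (t choose k)"
    by (rule binomial_ge_n_over_k_pow_k) (use \<open>2 * k \<le> t\<close> in simp)
  also have "\<dots> \<le> 2 ^ D"
  proof -
    have "s + k \<le> n" using \<open>2 * k \<le> t\<close> \<open>1 \<le> k\<close> unfolding t_def by linarith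
    then have "t choose k \<le> 2 ^ D" using rank nonzero by (simp add: t_def)
    then show ?thesis by (metis of_nat_le_iff of_nat_numeral of_nat_power)
  qed
  finally have "k \<le> D" by (rule power_le_imp_le_exp[rotated]) simp
  then show ?thesis using k(1) by (simp add: t_def)
qed

section \<open>Rank lower bounds for protocols\<close>

text \<open>Gaussian elimination: each step removes one rank-one term together with one row.\<close>

lemma card_le_if_identity_sum_rank_one:
  fixes u v :: "nat \<Rightarrow> 'a \<Rightarrow> 'b::field"
  assumes "finite I"
    and "\<forall>i\<in>I. \<forall>j\<in>I. (\<Sum>l<r. u l i * v l j) = of_bool (i = j)"
  shows "card I \<le> r"
  using assms
proof (induction r arbitrary: I u)
  case 0
  then show ?case by (cases "I = {}") auto
next
  case (Suc r)
  show ?case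
  proof (cases "\<forall>i\<in>I. u r i = 0")
    case True
    then have "\<forall>i\<in>I. \<forall>j\<in>I. (\<Sum>l<r. u l i * v l j) = of_bool (i = j)"
      using Suc.prems(2) by simp
    then show ?thesis using Suc.IH[OF Suc.prems(1)] by fastforce
  next
    case False
    then obtain i0 where i0: "i0 \<in> I" "u r i0 \<noteq> 0" by auto
    define u' where "u' l i = u l i - (u r i / u r i0) * u l i0" for l i
    have "\<forall>i\<in>I - {i0}. \<forall>j\<in>I - {i0}. (\<Sum>l<r. u' l i * v l j) = of_bool (i = j)"
    proof (intro ballI)
      fix i j assume i: "i \<in> I - {i0}" and j: "j \<in> I - {i0}"
      have "u' r i = 0" using i0 by (simp add: u'_def)
      then have "(\<Sum>l<r. u' l i * v l j) = (\<Sum>l<Suc r. u' l i * v l j)" by simp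
      also have "\<dots> = (\<Sum>l<Suc r. u l i * v l j) - (u r i / u r i0) * (\<Sum>l<Suc r. u l i0 * v l j)"
        by (simp add: u'_def algebra_simps sum_subtractf sum_distrib_left del: sum.lessThan_Suc)
      also have "\<dots> = of_bool (i = j)"
        using Suc.prems(2) i j i0 by auto
      finally show "(\<Sum>l<r. u' l i * v l j) = of_bool (i = j)" .
    qed
    then have "card (I - {i0}) \<le> r" using Suc.IH[of "I - {i0}" u'] Suc.prems(1) by blast
    then show ?thesis using i0 Suc.prems(1) by (simp add: card_Diff_singleton)
  qed
qed

text \<open>Each accepting leaf contributes the rectangle of inputs reaching it, as a pair of
  indicator functions.\<close>

fun protocol_rectangles :: "('a, 'b) protocol \<Rightarrow> (('a \<Rightarrow> 'c::comm_semiring_1) \<times> ('b \<Rightarrow> 'c)) list" where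
  "protocol_rectangles (Leaf v) = (if v then [(\<lambda>_. 1, \<lambda>_. 1)] else [])"
| "protocol_rectangles (AliceNode g P0 P1) =
     map (\<lambda>(a, b). (\<lambda>x. of_bool (\<not> g x) * a x, b)) (protocol_rectangles P0) @
     map (\<lambda>(a, b). (\<lambda>x. of_bool (g x) * a x, b)) (protocol_rectangles P1)"
| "protocol_rectangles (BobNode g P0 P1) =
     map (\<lambda>(a, b). (a, \<lambda>y. of_bool (\<not> g y) * b y)) (protocol_rectangles P0) @
     map (\<lambda>(a, b). (a, \<lambda>y. of_bool (g y) * b y)) (protocol_rectangles P1)"

lemma run_protocol_eq_sum_rectangles:
  "of_bool (run_protocol P x y) = (\<Sum>(a, b)\<leftarrow>protocol_rectangles P. a x * b y)"
proof (induction P)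
  case (Leaf v)
  then show ?case by simp
next
  case (AliceNode g P0 P1)
  then show ?case
    by (simp add: o_def case_prod_beta sum_list_const_mult mult.assoc)
next
  case (BobNode g P0 P1)
  then show ?case
    by (simp add: o_def case_prod_beta sum_list_const_mult mult.left_commute)
qed

lemma length_protocol_rectangles_le: "length (protocol_rectangles P) \<le> 2 ^ protocol_depth P"
proof (induction P)
  case (AliceNode g P0 P1)
  let ?m = "max (protocol_depth P0) (protocol_depth P1)"
  have "2 ^ protocol_depth P0 \<le> (2::nat) ^ ?m" "2 ^ protocol_depth P1 \<le> (2::nat) ^ ?m"
    by simp_all
  with AliceNode.IH show ?case
    unfolding protocol_rectangles.simps protocol_depth.simps length_append length_map power_Suc
    by linarith
next
  case (BobNode g P0 P1)
  let ?m = "max (protocol_depth P0) (protocol_depth P1)"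
  have "2 ^ protocol_depth P0 \<le> (2::nat) ^ ?m" "2 ^ protocol_depth P1 \<le> (2::nat) ^ ?m"
    by simp_all
  with BobNode.IH show ?case
    unfolding protocol_rectangles.simps protocol_depth.simps length_append length_map power_Suc
    by linarith
qed simp

lemma count_list_True_eq_card: "count_list xs True = card {i. i < length xs \<and> xs ! i}"
  by (simp add: count_list_eq_length_filter length_filter_conv_card)

text \<open>Feed in the inputs with ones exactly on \<open>{..<s} \<union> S\<close> for \<open>k\<close>-subsets \<open>S\<close> of \<open>{s..<n}\<close>.
  Inverting over the subsets of \<open>S\<close> on Alice's side turns the matrix
  \<open>G (s + card (S \<inter> T))\<close> into \<open>forward_diff k G s\<close> times the identity, whose size is
  \<open>(n - s) choose k\<close>.\<close>

lemma binomial_le_rank_if_forward_diff_nonzero: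
  fixes G :: "nat \<Rightarrow> 'a::field" and \<alpha> \<beta> :: "nat \<Rightarrow> bool list \<Rightarrow> 'a"
  assumes decomp: "\<And>x y. length x = n \<Longrightarrow> length y = n \<Longrightarrow>
      G (count_list (map2 (\<and>) x y) True) = (\<Sum>l<r. \<alpha> l x * \<beta> l y)"
    and "s + k \<le> n" and nonzero: "forward_diff k G s \<noteq> 0"
  shows "(n - s) choose k \<le> r"
proof -
  define input where "input S = map (\<lambda>i. i < s \<or> i \<in> S) [0..<n]" for S :: "nat set"
  have count_input: "count_list (input Y) True = s + card Y" if "Y \<subseteq> {s..<n}" for Y
  proof -
    have "{i. i < length (input Y) \<and> input Y ! i} = {..<s} \<union> Y"
      using that \<open>s + k \<le> n\<close> by (auto simp: input_def)
    moreover have "card ({..<s} \<union> Y) = s + card Y"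
      using that by (subst card_Un_disjoint) (auto intro: finite_subset)
    ultimately show ?thesis by (simp add: count_list_True_eq_card)
  qed
  have G_input: "G (s + card (X \<inter> T)) = (\<Sum>l<r. \<alpha> l (input X) * \<beta> l (input T))"
    if "X \<subseteq> {s..<n}" "T \<subseteq> {s..<n}" for X T
  proof -
    have "map2 (\<and>) (input X) (input T) = input (X \<inter> T)"
      by (auto intro!: nth_equalityI simp: input_def)
    then have "G (s + card (X \<inter> T)) = G (count_list (map2 (\<and>) (input X) (input T)) True)"
      using that by (simp add: count_input le_infI1)
    also have "\<dots> = (\<Sum>l<r. \<alpha> l (input X) * \<beta> l (input T))"
      by (rule decomp) (simp_all add: input_def)
    finally show ?thesis .
  qed
  define I where "I = {S. S \<subseteq> {s..<n} \<and> card S = k}"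
  define \<delta> where "\<delta> = forward_diff k G s"
  define u where "u l S = (\<Sum>X\<in>Pow S. (-1)^(k - card X) * \<alpha> l (input X)) / \<delta>" for l S
  define v where "v l T = \<beta> l (input T)" for l T
  have "\<forall>S\<in>I. \<forall>T\<in>I. (\<Sum>l<r. u l S * v l T) = of_bool (S = T)"
  proof (intro ballI)
    fix S T assume S: "S \<in> I" and T: "T \<in> I"
    have "finite S" using S unfolding I_def by (auto intro: finite_subset)
    have "(\<Sum>l<r. u l S * v l T)
        = (\<Sum>l<r. \<Sum>X\<in>Pow S. (-1)^(k - card X) * (\<alpha> l (input X) * \<beta> l (input T))) / \<delta>"
      by (simp add: u_def v_def sum_distrib_right sum_divide_distrib mult.assoc)
    also have "\<dots> = (\<Sum>X\<in>Pow S. (-1)^(k - card X) * (\<Sum>l<r. \<alpha> l (input X) * \<beta> l (input T))) / \<delta>"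
      by (subst sum.swap) (simp add: sum_distrib_left)
    also have "\<dots> = (\<Sum>X\<in>Pow S. (-1)^(card S - card X) * G (s + card (X \<inter> T))) / \<delta>"
      using S T G_input by (intro arg_cong[where f="\<lambda>x. x / \<delta>"] sum.cong) (auto simp: I_def)
    also have "\<dots> = of_bool (S = T)"
    proof (cases "S = T")
      case True
      have "(\<Sum>X\<in>Pow S. (-1)^(card S - card X) * G (s + card (X \<inter> T)))
          = (\<Sum>X\<in>Pow S. (-1)^(card S - card X) * G (s + card X))"
        by (rule sum.cong) (auto simp: True Int_absorb2)
      also have "\<dots> = \<delta>"
        using forward_diff_eq_sum_Pow[OF \<open>finite S\<close>, of G s] S by (simp add: I_def \<delta>_def)
      finally show ?thesis using True nonzero by (simp add: \<delta>_def)
    next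
      case False
      have "\<not> S \<subseteq> T"
        using S T False card_subset_eq[of T S] unfolding I_def by (auto intro: finite_subset)
      then obtain e where "e \<in> S" "e \<notin> T" by auto
      then have "(\<Sum>X\<in>Pow S. (-1)^(card S - card X) * (\<lambda>Y. G (s + card Y)) (X \<inter> T)) = 0"
        by (intro alternating_sum_Pow_eq_0[OF \<open>finite S\<close>])
      then show ?thesis using False by simp
    qed
    finally show "(\<Sum>l<r. u l S * v l T) = of_bool (S = T)" .
  qed
  moreover have "finite I"
    unfolding I_def by (rule finite_subset[of _ "Pow {s..<n}"]) auto
  ultimately have "card I \<le> r" by (rule card_le_if_identity_sum_rank_one[rotated])
  moreover have "card I = (n - s) choose k"
    unfolding I_def by (subst n_subsets) auto
  ultimately show ?thesis by simp
qed

fun alice_reveals :: "nat \<Rightarrow> (bool list \<Rightarrow> (bool list, 'b) protocol) \<Rightarrow> (bool list, 'b) protocol" where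
  "alice_reveals 0 c = c []"
| "alice_reveals (Suc k) c =
     AliceNode (\<lambda>x. x ! k) (alice_reveals k (\<lambda>bs. c (bs @ [False]))) (alice_reveals k (\<lambda>bs. c (bs @ [True])))"

fun bob_reveals :: "nat \<Rightarrow> (bool list \<Rightarrow> ('a, bool list) protocol) \<Rightarrow> ('a, bool list) protocol" where
  "bob_reveals 0 c = c []"
| "bob_reveals (Suc k) c =
     BobNode (\<lambda>y. y ! k) (bob_reveals k (\<lambda>bs. c (bs @ [False]))) (bob_reveals k (\<lambda>bs. c (bs @ [True])))"

lemma run_alice_reveals:
  "k \<le> length x \<Longrightarrow> run_protocol (alice_reveals k c) x y = run_protocol (c (take k x)) x y"
proof (induction k arbitrary: c)
  case (Suc k)
  have "run_protocol (alice_reveals (Suc k) c) x y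
      = run_protocol (alice_reveals k (\<lambda>bs. c (bs @ [x ! k]))) x y"
    by (cases "x ! k") simp_all
  also have "\<dots> = run_protocol (c (take (Suc k) x)) x y"
    using Suc by (simp add: take_Suc_conv_app_nth)
  finally show ?case .
qed simp

lemma run_bob_reveals:
  "k \<le> length y \<Longrightarrow> run_protocol (bob_reveals k c) x y = run_protocol (c (take k y)) x y"
proof (induction k arbitrary: c)
  case (Suc k)
  have "run_protocol (bob_reveals (Suc k) c) x y
      = run_protocol (bob_reveals k (\<lambda>bs. c (bs @ [y ! k]))) x y"
    by (cases "y ! k") simp_all
  also have "\<dots> = run_protocol (c (take (Suc k) y)) x y"
    using Suc by (simp add: take_Suc_conv_app_nth)
  finally show ?case .
qed simp

lemma Dcc_AND_attained:
  obtains P where "protocol_depth P = Dcc_AND n f"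
    and "\<And>x y. length x = n \<Longrightarrow> length y = n \<Longrightarrow> run_protocol P x y = compose_AND f x y"
proof -
  define trivial where
    "trivial = alice_reveals n (\<lambda>xs. bob_reveals n (\<lambda>ys. Leaf (compose_AND f xs ys)))"
  have "\<forall>x\<in>{x. length x = n}. \<forall>y\<in>{y. length y = n}. run_protocol trivial x y = compose_AND f x y"
    by (simp add: trivial_def run_alice_reveals run_bob_reveals)
  then have "\<exists>d. \<exists>P :: (bool list, bool list) protocol. protocol_depth P = d \<and>
      (\<forall>x\<in>{x. length x = n}. \<forall>y\<in>{y. length y = n}. run_protocol P x y = compose_AND f x y)"
    by blast
  from LeastI_ex[OF this] show ?thesis
    using that unfolding Dcc_AND_def Dcc_def by blast
qed

lemma Dcc_AND_pos:
  assumes "length x = n" and "length y = n" and "f x \<noteq> f y"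
  shows "0 < Dcc_AND n f"
proof (rule ccontr)
  assume "\<not> 0 < Dcc_AND n f"
  then obtain P where "protocol_depth P = 0"
    and P: "\<And>x y. length x = n \<Longrightarrow> length y = n \<Longrightarrow> run_protocol P x y = compose_AND f x y"
    using Dcc_AND_attained[of n f] by auto
  then obtain v where "P = Leaf v" by (cases P) auto
  have and_True: "map2 (\<and>) z (replicate n True) = z" if "length z = n" for z
    using that by (induction z arbitrary: n) (auto simp: Suc_length_conv)
  have "f z = v" if "length z = n" for z
    using P[OF that, of "replicate n True"] and_True[OF that] \<open>P = Leaf v\<close>
    by (simp add: compose_AND_def)
  then show False using assms by simp
qed

section \<open>Disjunct families\<close>

definition disjunct_family :: "nat \<Rightarrow> nat \<Rightarrow> nat set list \<Rightarrow> bool" where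
  "disjunct_family n d Ss \<longleftrightarrow> (\<forall>S\<in>set Ss. S \<subseteq> {..<n}) \<and>
     (\<forall>i<n. \<forall>T. T \<subseteq> {..<n} \<longrightarrow> i \<notin> T \<longrightarrow> card T \<le> d \<longrightarrow> (\<exists>S\<in>set Ss. i \<in> S \<and> S \<inter> T = {}))"

lemma NAADT_le_length:
  assumes "\<forall>S\<in>set Ss. S \<subseteq> {..<n}"
    and "\<And>x y. length x = n \<Longrightarrow> length y = n \<Longrightarrow>
         map (\<lambda>S. AND_S S x) Ss = map (\<lambda>S. AND_S S y) Ss \<Longrightarrow> f x = f y"
  shows "NAADT n f \<le> length Ss"
  unfolding NAADT_def by (rule Least_le) (use assms in blast)

lemma NAADT_eq_0_if_constant:
  assumes "\<And>x y. length x = n \<Longrightarrow> length y = n \<Longrightarrow> f x = f y"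
  shows "NAADT n f = 0"
proof -
  have "NAADT n f \<le> length ([] :: nat set list)"
  proof (rule NAADT_le_length)
    fix x y :: "bool list" assume "length x = n" "length y = n"
    then show "f x = f y" by (rule assms)
  qed simp
  then show ?thesis by simp
qed

text \<open>The answers reveal the indices lying in no satisfied query. These include all zeros of
  the input, and are exactly its zeros if there are at most \<open>d\<close> of them.\<close>

lemma NAADT_le_disjunct_family:
  assumes const: "\<And>x. length x = n \<Longrightarrow> d < card {i. i < n \<and> \<not> x ! i} \<Longrightarrow> f x = c"
    and disjunct: "disjunct_family n d Ss"
  shows "NAADT n f \<le> length Ss"
proof (rule NAADT_le_length)
  show sub: "\<forall>S\<in>set Ss. S \<subseteq> {..<n}" using disjunct by (simp add: disjunct_family_def)
  fix x y :: "bool list"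
  assume x: "length x = n" and y: "length y = n"
    and answers: "map (\<lambda>S. AND_S S x) Ss = map (\<lambda>S. AND_S S y) Ss"
  define Z where "Z z = {i. i < n \<and> \<not> z ! i}" for z :: "bool list"
  define U where "U z = {i. i < n \<and> (\<forall>S\<in>set Ss. i \<in> S \<longrightarrow> \<not> AND_S S z)}" for z
  have "U x = U y" using answers unfolding U_def map_eq_conv by auto
  have Z_sub_U: "Z z \<subseteq> U z" for z unfolding Z_def U_def AND_S_def by auto
  have U_eq_Z: "U z = Z z" if few: "card (Z z) \<le> d" for z
  proof (intro equalityI subsetI Z_sub_U[THEN subsetD])
    fix i assume i: "i \<in> U z"
    show "i \<in> Z z"
    proof (rule ccontr)
      assume "i \<notin> Z z"
      moreover have "i < n" using i by (simp add: U_def)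
      moreover have "Z z \<subseteq> {..<n}" by (auto simp: Z_def)
      ultimately obtain S where S: "S \<in> set Ss" "i \<in> S" "S \<inter> Z z = {}"
        using disjunct few unfolding disjunct_family_def by blast
      then have "AND_S S z" using sub by (auto simp: AND_S_def Z_def)
      then show False using i S by (simp add: U_def)
    qed
  qed
  have same_Z: "Z x' = Z y'" if "card (Z x') \<le> d" "U x' = U y'" for x' y'
  proof -
    have "card (Z y') \<le> card (U y')" using Z_sub_U by (simp add: U_def card_mono)
    also have "\<dots> = card (Z x')" using U_eq_Z that by simp
    finally show ?thesis using U_eq_Z that by (metis le_trans)
  qed
  show "f x = f y"
  proof (cases "card (Z x) \<le> d \<or> card (Z y) \<le> d")
    case True
    then have "Z x = Z y" using same_Z \<open>U x = U y\<close> by metis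
    then have "x = y" using x y by (intro nth_equalityI) (auto simp: Z_def set_eq_iff)
    then show ?thesis by simp
  next
    case False
    then show ?thesis using const x y by (simp add: Z_def not_le)
  qed
qed

lemma disjunct_family_singletons: "disjunct_family n d (map (\<lambda>i. {i}) [0..<n])"
  unfolding disjunct_family_def by auto

lemma disjunct_family_0: "disjunct_family n 0 [{..<n}]"
  unfolding disjunct_family_def by (auto dest: finite_subset)

definition agreement :: "nat \<Rightarrow> (nat \<Rightarrow> 'a) \<Rightarrow> (nat \<Rightarrow> 'a) \<Rightarrow> nat" where
  "agreement L u v = card {a \<in> {..<L}. u a = v a}"

lemma agreement_commute: "agreement L u v = agreement L v u"
  unfolding agreement_def by (simp add: eq_commute)

lemma card_agreeing_words_le:
  assumes "A \<le> L"
  shows "card {w \<in> PiE {..<L} (\<lambda>_. {..<q}). A \<le> agreement L w c} \<le> (L choose A) * q ^ (L - A)"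
proof -
  define PS where "PS = {P. P \<subseteq> {..<L} \<and> card P = A}"
  define B where "B P = PiE {..<L} (\<lambda>a. if a \<in> P then {c a} else {..<q})" for P
  have "{w \<in> PiE {..<L} (\<lambda>_. {..<q}). A \<le> agreement L w c} \<subseteq> (\<Union>P\<in>PS. B P)"
  proof
    fix w assume w: "w \<in> {w \<in> PiE {..<L} (\<lambda>_. {..<q}). A \<le> agreement L w c}"
    then obtain P where P: "P \<subseteq> {a \<in> {..<L}. w a = c a}" "card P = A"
      by (auto simp: agreement_def elim: obtain_subset_with_card_n)
    then have "w \<in> B P" "P \<in> PS" using w unfolding B_def PS_def PiE_iff by auto
    then show "w \<in> (\<Union>P\<in>PS. B P)" by auto
  qed
  moreover have "finite PS" unfolding PS_def by (rule finite_subset[of _ "Pow {..<L}"]) auto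
  ultimately have "card {w \<in> PiE {..<L} (\<lambda>_. {..<q}). A \<le> agreement L w c} \<le> card (\<Union>P\<in>PS. B P)"
    by (intro card_mono) (auto intro!: finite_PiE simp: B_def)
  also have "\<dots> \<le> (\<Sum>P\<in>PS. card (B P))" by (rule card_UN_le[OF \<open>finite PS\<close>])
  also have "\<dots> = (\<Sum>P\<in>PS. q ^ (L - A))"
  proof (rule sum.cong)
    fix P assume "P \<in> PS"
    then have P: "P \<subseteq> {..<L}" "card P = A" by (auto simp: PS_def)
    have "card (B P) = (\<Prod>a<L. if a \<in> P then 1 else q)"
      unfolding B_def by (subst card_PiE) (auto intro: prod.cong)
    also have "\<dots> = q ^ card ({..<L} - P)"
      by (simp add: prod.If_cases Diff_eq)
    also have "card ({..<L} - P) = L - A" using P by (simp add: card_Diff_subset finite_subset)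
    finally show "card (B P) = q ^ (L - A)" .
  qed simp
  also have "\<dots> = card PS * q ^ (L - A)" by simp
  also have "card PS = L choose A"
    unfolding PS_def by (subst n_subsets) auto
  finally show ?thesis .
qed

text \<open>Greedy (Gilbert--Varshamov) step: the words agreeing with one of \<open>m < 2 ^ A\<close> given
  words in at least \<open>A\<close> positions number at most \<open>m (L choose A) (2 L) ^ (L - A) < (2 L) ^ L\<close>.\<close>

lemma exists_word_with_small_agreement:
  fixes m :: nat and c :: "nat \<Rightarrow> nat \<Rightarrow> nat"
  assumes "m < 2 ^ A" and "1 \<le> A" and "A \<le> L"
  shows "\<exists>w \<in> PiE {..<L} (\<lambda>_. {..<2 * L}). \<forall>i<m. agreement L w (c i) < A"
proof -
  define q where "q = 2 * L"
  define W where "W = PiE {..<L} (\<lambda>_. {..<q})"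
  define Bad where "Bad = (\<Union>i<m. {w \<in> W. A \<le> agreement L w (c i)})"
  have "card Bad \<le> (\<Sum>i<m. card {w \<in> W. A \<le> agreement L w (c i)})"
    unfolding Bad_def by (rule card_UN_le) simp
  also have "\<dots> \<le> m * ((L choose A) * q ^ (L - A))"
    using sum_bounded_above[of "{..<m}" "\<lambda>i. card {w \<in> W. A \<le> agreement L w (c i)}"]
      card_agreeing_words_le[OF \<open>A \<le> L\<close>]
    by (simp add: W_def)
  also have "\<dots> < 2 ^ A * ((L choose A) * q ^ (L - A))"
    using assms by (simp add: q_def)
  also have "\<dots> \<le> 2 ^ A * (L ^ A * q ^ (L - A))"
    using binomial_le_pow[OF \<open>A \<le> L\<close>] by simp
  also have "\<dots> = q ^ (A + (L - A))"
    by (simp add: q_def power_mult_distrib power_add)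
  also have "\<dots> = q ^ L"
    using \<open>A \<le> L\<close> by simp
  also have "\<dots> = card W" by (simp add: W_def card_PiE)
  finally have "card Bad < card W" .
  moreover have "finite Bad"
    by (rule finite_subset[of _ W]) (auto simp: Bad_def W_def intro: finite_PiE)
  ultimately have "\<not> W \<subseteq> Bad"
    using card_mono[of Bad W] by auto
  then show ?thesis by (force simp: Bad_def W_def q_def not_le)
qed

lemma exists_code_with_small_agreement:
  assumes "n \<le> 2 ^ A" and "1 \<le> A" and "A \<le> L"
  shows "\<exists>c :: nat \<Rightarrow> nat \<Rightarrow> nat. (\<forall>i<n. c i \<in> PiE {..<L} (\<lambda>_. {..<2 * L})) \<and>
           (\<forall>i<n. \<forall>j<n. i \<noteq> j \<longrightarrow> agreement L (c i) (c j) < A)"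
  using assms(1)
proof (induction n)
  case 0
  then show ?case by simp
next
  case (Suc m)
  then obtain c :: "nat \<Rightarrow> nat \<Rightarrow> nat" where c: "\<forall>i<m. c i \<in> PiE {..<L} (\<lambda>_. {..<2 * L})"
    "\<forall>i<m. \<forall>j<m. i \<noteq> j \<longrightarrow> agreement L (c i) (c j) < A"
    by auto
  obtain w where w: "w \<in> PiE {..<L} (\<lambda>_. {..<2 * L})" "\<forall>i<m. agreement L w (c i) < A"
    using exists_word_with_small_agreement[of m A L c] Suc.prems assms(2,3) by auto
  have "\<forall>i<Suc m. (c(m := w)) i \<in> PiE {..<L} (\<lambda>_. {..<2 * L})"
    using c w by (simp add: less_Suc_eq)
  moreover have "\<forall>i<Suc m. \<forall>j<Suc m. i \<noteq> j \<longrightarrow> agreement L ((c(m := w)) i) ((c(m := w)) j) < A"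
    using c w agreement_commute[of L w] by (auto simp: less_Suc_eq)
  ultimately show ?case by blast
qed

text \<open>Kautz--Singleton: the codewords of at most \<open>d\<close> indices in \<open>T\<close> agree with that of \<open>i\<close> in
  at most \<open>d (A - 1) < L\<close> positions, so at some position \<open>a\<close> the query
  "the codeword of \<open>j\<close> has symbol \<open>c i a\<close> at \<open>a\<close>" contains \<open>i\<close> and avoids \<open>T\<close>.\<close>

lemma disjunct_family_of_code:
  fixes c :: "nat \<Rightarrow> nat \<Rightarrow> nat"
  assumes words: "\<forall>i<n. c i \<in> PiE {..<L} (\<lambda>_. {..<q})"
    and far: "\<forall>i<n. \<forall>j<n. i \<noteq> j \<longrightarrow> agreement L (c i) (c j) < A"
    and "d * (A - 1) < L"
  shows "disjunct_family n d (map (\<lambda>(a, b). {j. j < n \<and> c j a = b}) (List.product [0..<L] [0..<q]))"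
  unfolding disjunct_family_def
proof (intro conjI allI impI)
  fix i T assume i: "i < n" and T: "T \<subseteq> {..<n}" "i \<notin> T" "card T \<le> d"
  define Agree where "Agree = (\<Union>j\<in>T. {a \<in> {..<L}. c i a = c j a})"
  have "finite T" using T finite_subset by blast
  have "card Agree \<le> (\<Sum>j\<in>T. agreement L (c i) (c j))"
    unfolding Agree_def agreement_def by (rule card_UN_le[OF \<open>finite T\<close>])
  also have "\<dots> \<le> card T * (A - 1)"
    using sum_bounded_above[of T "\<lambda>j. agreement L (c i) (c j)" "A - 1"] far i T
    by (force simp: less_Suc_eq_le)
  also have "\<dots> \<le> d * (A - 1)" using T by simp
  finally have "card Agree < card {..<L}" using \<open>d * (A - 1) < L\<close> by simp
  moreover have "Agree \<subseteq> {..<L}" by (auto simp: Agree_def)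
  ultimately have "Agree \<noteq> {..<L}" by auto
  with \<open>Agree \<subseteq> {..<L}\<close> obtain a where a: "a < L" "a \<notin> Agree" by blast
  have "c i a < q" using words i a(1) by (auto dest: PiE_mem)
  then have "(a, c i a) \<in> set (List.product [0..<L] [0..<q])" using a(1) by simp
  moreover have "i \<in> {j. j < n \<and> c j a = c i a}" using i by simp
  moreover have "{j. j < n \<and> c j a = c i a} \<inter> T = {}"
    using a unfolding Agree_def by auto
  ultimately show "\<exists>S\<in>set (map (\<lambda>(a, b). {j. j < n \<and> c j a = b}) (List.product [0..<L] [0..<q])).
      i \<in> S \<and> S \<inter> T = {}"
    by force
qed auto

lemma exists_disjunct_family_of_length:
  assumes "1 \<le> d" and "2 \<le> n"
  shows "\<exists>Ss. disjunct_family n d Ss \<and> length Ss = 2 * (d * ceillog2 n)^2"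
proof -
  define A where "A = ceillog2 n"
  define L where "L = d * A"
  have "1 \<le> A" using ceillog2_ge_iff[of n 1] \<open>2 \<le> n\<close> by (simp add: A_def)
  moreover have "n \<le> 2 ^ A" by (simp add: A_def le_two_power_ceillog2)
  moreover have "A \<le> L" using \<open>1 \<le> d\<close> by (simp add: L_def)
  ultimately obtain c :: "nat \<Rightarrow> nat \<Rightarrow> nat" where
    "\<forall>i<n. c i \<in> PiE {..<L} (\<lambda>_. {..<2 * L})"
    "\<forall>i<n. \<forall>j<n. i \<noteq> j \<longrightarrow> agreement L (c i) (c j) < A"
    using exists_code_with_small_agreement by blast
  moreover have "d * (A - 1) < L"
    using \<open>1 \<le> d\<close> \<open>1 \<le> A\<close> by (simp add: L_def diff_mult_distrib2)
  ultimately have "disjunct_family n d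
      (map (\<lambda>(a, b). {j. j < n \<and> c j a = b}) (List.product [0..<L] [0..<2 * L]))"
    by (rule disjunct_family_of_code)
  then show ?thesis by (auto simp: L_def A_def power2_eq_square)
qed

text \<open>From \<open>(n / d) ^ d \<le> n choose d\<close> and \<open>d\<^sup>2 < n\<close> we get \<open>n ^ d \<le> 2 ^ (2 D)\<close>, which bounds
  both \<open>d\<close> and \<open>d (ceillog2 n - 1)\<close> by \<open>2 D\<close>.\<close>

lemma mult_ceillog2_le_if_binomial_le:
  fixes n d D :: nat
  assumes "1 \<le> d" and "d * d < n" and binomial: "n choose d \<le> 2 ^ D"
  shows "d * ceillog2 n \<le> 4 * D"
proof -
  have "d \<le> d * d" using \<open>1 \<le> d\<close> by simp
  then have "d < n" using \<open>d * d < n\<close> by linarith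
  have "(real n / real d) ^ d \<le> real (n choose d)"
    by (rule binomial_ge_n_over_k_pow_k) (use \<open>d < n\<close> in simp)
  also have "\<dots> \<le> 2 ^ D" using binomial by (metis of_nat_le_iff of_nat_numeral of_nat_power)
  finally have binomial_real: "(real n / real d) ^ d \<le> 2 ^ D" .
  have "real d * real d * real n \<le> real n * real n"
    using \<open>d * d < n\<close> by (intro mult_right_mono) (simp_all flip: of_nat_mult)
  then have "real n \<le> (real n / real d) ^ 2"
    using \<open>1 \<le> d\<close> by (simp add: power2_eq_square field_simps mult.assoc)
  then have "real n ^ d \<le> ((real n / real d) ^ 2) ^ d" by (rule power_mono) simp
  also have "\<dots> = ((real n / real d) ^ d) ^ 2" by (simp flip: power_mult add: mult.commute)
  also have "\<dots> \<le> (2 ^ D) ^ 2" by (rule power_mono[OF binomial_real]) simp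
  finally have n_pow: "real n ^ d \<le> 2 ^ (2 * D)" by (simp flip: power_mult add: mult.commute)
  have "(2::real) ^ d \<le> real n ^ d"
    using \<open>d < n\<close> \<open>1 \<le> d\<close> by (intro power_mono) simp_all
  then have "(2::real) ^ d \<le> 2 ^ (2 * D)" using n_pow by linarith
  then have "d \<le> 2 * D" by (rule power_le_imp_le_exp[rotated]) simp
  have "2 ^ ceillog2 n < 2 * n" using two_power_ceillog2_gt[of n] \<open>d < n\<close> by simp
  then have "(2::nat) ^ (ceillog2 n - 1) \<le> n" by (cases "ceillog2 n") simp_all
  then have "(2::real) ^ ((ceillog2 n - 1) * d) \<le> real n ^ d"
    by (simp add: power_mult power_mono flip: of_nat_le_iff)
  then have "(2::real) ^ ((ceillog2 n - 1) * d) \<le> 2 ^ (2 * D)" using n_pow by linarith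
  then have "(ceillog2 n - 1) * d \<le> 2 * D" by (rule power_le_imp_le_exp[rotated]) simp
  moreover have "d * ceillog2 n \<le> d * (ceillog2 n - 1) + d" by (cases "ceillog2 n") simp_all
  ultimately show ?thesis using \<open>d \<le> 2 * D\<close> by (simp add: mult.commute)
qed

lemma exists_short_disjunct_family:
  assumes "1 \<le> D" and "d < 4 * D" and "n choose d \<le> 2 ^ D"
  shows "\<exists>Ss. disjunct_family n d Ss \<and> length Ss \<le> 32 * D^2"
proof -
  consider "d = 0" | "1 \<le> d" "n \<le> d * d" | "1 \<le> d" "d * d < n" by linarith
  then show ?thesis
  proof cases
    case 1
    have "1 \<le> 32 * D^2" using \<open>1 \<le> D\<close> by (simp add: Suc_le_eq)
    then show ?thesis using disjunct_family_0[of n] 1 by force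
  next
    case 2
    have "d * d \<le> (4 * D) * (4 * D)" using \<open>d < 4 * D\<close> by (intro mult_le_mono) simp_all
    then have "n \<le> 32 * D^2" using 2 by (simp add: power2_eq_square)
    then show ?thesis using disjunct_family_singletons[of n d] by force
  next
    case 3
    then have "2 \<le> n" using le_square[of d] by linarith
    then obtain Ss where "disjunct_family n d Ss" "length Ss = 2 * (d * ceillog2 n)^2"
      using exists_disjunct_family_of_length \<open>1 \<le> d\<close> by blast
    moreover have "(d * ceillog2 n)^2 \<le> (4 * D)^2"
      using mult_ceillog2_le_if_binomial_le[OF 3(1,2) assms(3)] by (rule power_mono) simp
    ultimately show ?thesis by (auto simp: power_mult_distrib)
  qed
qed

section \<open>Symmetric functions\<close>

definition sym_profile :: "nat \<Rightarrow> (bool list \<Rightarrow> bool) \<Rightarrow> nat \<Rightarrow> bool" where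
  "sym_profile n f w = f (replicate w True @ replicate (n - w) False)"

lemma symmetric_fn_eq_sym_profile:
  assumes "symmetric_fn n f" and "length x = n"
  shows "f x = sym_profile n f (count_list x True)"
proof -
  define w where "w = count_list x True"
  define z where "z = replicate w True @ replicate (n - w) False"
  have "w \<le> n" using count_le_length[of x True] assms(2) by (simp add: w_def)
  then have "length z = n" by (simp add: z_def)
  moreover have "count_list (replicate m True) True = m" for m by (induction m) auto
  then have "count_list z True = w" by (simp add: z_def)
  ultimately have "f x = f z"
    using assms unfolding symmetric_fn_def w_def by metis
  then show ?thesis by (simp add: sym_profile_def z_def w_def)
qed


lemma binomial_le_two_pow_Dcc_AND:
  assumes "symmetric_fn n f" and "s + k \<le> n"
    and "forward_diff k (\<lambda>w. of_bool (sym_profile n f w) :: real) s \<noteq> 0"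
  shows "(n - s) choose k \<le> 2 ^ Dcc_AND n f"
proof -
  obtain P where depth: "protocol_depth P = Dcc_AND n f"
    and P: "\<And>x y. length x = n \<Longrightarrow> length y = n \<Longrightarrow> run_protocol P x y = compose_AND f x y"
    using Dcc_AND_attained[of n f] by blast
  define R :: "((bool list \<Rightarrow> real) \<times> (bool list \<Rightarrow> real)) list" where "R = protocol_rectangles P"
  have "of_bool (sym_profile n f (count_list (map2 (\<and>) x y) True))
        = (\<Sum>l<length R. fst (R ! l) x * snd (R ! l) y)"
    if "length x = n" "length y = n" for x y
  proof -
    have run_eq: "run_protocol P x y = sym_profile n f (count_list (map2 (\<and>) x y) True)"
      using P[OF that] symmetric_fn_eq_sym_profile[OF assms(1), of "map2 (\<and>) x y"] that
      by (simp add: compose_AND_def)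
    have "of_bool (run_protocol P x y) = (\<Sum>(a, b)\<leftarrow>R. a x * b y)"
      unfolding R_def by (rule run_protocol_eq_sum_rectangles)
    also have "\<dots> = (\<Sum>l<length R. fst (R ! l) x * snd (R ! l) y)"
      by (auto simp: sum_list_sum_nth atLeast0LessThan case_prod_beta intro!: sum.cong)
    finally show ?thesis using run_eq by (simp only:)
  qed
  then have "(n - s) choose k \<le> length R"
    by (rule binomial_le_rank_if_forward_diff_nonzero[where G="\<lambda>w. of_bool (sym_profile n f w)"
          and \<alpha>="\<lambda>l. fst (R ! l)" and \<beta>="\<lambda>l. snd (R ! l)", OF _ assms(2,3)])
  also have "\<dots> \<le> 2 ^ Dcc_AND n f"
    using length_protocol_rectangles_le[of P] depth by (simp add: R_def)
  finally show ?thesis .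
qed

lemma count_list_True_add_card_False:
  assumes "length x = n"
  shows "count_list x True + card {i. i < n \<and> \<not> x ! i} = n"
proof -
  have "{i. i < n \<and> x ! i} \<union> {i. i < n \<and> \<not> x ! i} = {..<n}" by auto
  moreover have "card ({i. i < n \<and> x ! i} \<union> {i. i < n \<and> \<not> x ! i})
      = card {i. i < n \<and> x ! i} + card {i. i < n \<and> \<not> x ! i}"
    by (rule card_Un_disjoint) auto
  ultimately have "card {i. i < n \<and> x ! i} + card {i. i < n \<and> \<not> x ! i} = card {..<n}"
    by simp
  then show ?thesis using assms by (simp add: count_list_True_eq_card)
qed

lemma Dcc_AND_lower_bounds:
  assumes sym: "symmetric_fn n f" and "s < n"
    and jump: "sym_profile n f s \<noteq> sym_profile n f (Suc s)"
    and before: "\<And>w. w \<le> s \<Longrightarrow> sym_profile n f w = sym_profile n f 0"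
  shows "1 \<le> Dcc_AND n f" and "n choose (n - Suc s) \<le> 2 ^ Dcc_AND n f"
    and "n - Suc s < 4 * Dcc_AND n f"
proof -
  define G where "G = (\<lambda>w. of_bool (sym_profile n f w) :: real)"
  have rank: "(n - s') choose k \<le> 2 ^ Dcc_AND n f"
    if "s' + k \<le> n" "forward_diff k G s' \<noteq> 0" for s' k
    using binomial_le_two_pow_Dcc_AND[OF sym that(1)] that(2) by (simp add: G_def)
  have "f (replicate s True @ replicate (n - s) False)
      \<noteq> f (replicate (Suc s) True @ replicate (n - Suc s) False)"
    using jump unfolding sym_profile_def .
  then have "0 < Dcc_AND n f"
    by (rule Dcc_AND_pos[rotated 2]) (use \<open>s < n\<close> in simp_all)
  then show "1 \<le> Dcc_AND n f" by simp
  have G_before: "G j = G 0" if "j \<le> s" for j using before[OF that] by (simp add: G_def)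
  have "forward_diff (Suc s) G 0 = G (0 + Suc s) - G 0"
    by (rule forward_diff_after_constant) (auto intro: G_before)
  then have "forward_diff (Suc s) G 0 = G (Suc s) - G s" using G_before[of s] by simp
  moreover have "G (Suc s) \<noteq> G s" using jump by (simp add: G_def)
  ultimately have "forward_diff (Suc s) G 0 \<noteq> 0" by simp
  then have "n choose Suc s \<le> 2 ^ Dcc_AND n f" using rank[of 0 "Suc s"] \<open>s < n\<close> by simp
  then show "n choose (n - Suc s) \<le> 2 ^ Dcc_AND n f"
    using binomial_symmetric[of "Suc s" n] \<open>s < n\<close> by simp
  have "n - s \<le> 4 * Dcc_AND n f"
    using jump_distance_to_end_le[of G s "Dcc_AND n f" n] rank jump \<open>1 \<le> Dcc_AND n f\<close>
    by (simp add: G_def)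
  then show "n - Suc s < 4 * Dcc_AND n f" using \<open>s < n\<close> by simp
qed

lemma eq_at_0_if_steps_eq:
  assumes "\<And>w. w < m \<Longrightarrow> g w = g (Suc w)" and "w \<le> m"
  shows "g w = g 0"
  using assms(2)
proof (induction w)
  case (Suc w)
  then show ?case using assms(1)[of w] by simp
qed simp

lemma NAADT_le_Dcc_AND_sq:
  assumes sym: "symmetric_fn n f"
  shows "NAADT n f \<le> 32 * Dcc_AND n f ^ 2"
proof (cases "\<forall>w<n. sym_profile n f w = sym_profile n f (Suc w)")
  case True
  have "f z = sym_profile n f 0" if "length z = n" for z
  proof -
    have "count_list z True \<le> n" using count_le_length[of z True] that by simp
    with True have "sym_profile n f (count_list z True) = sym_profile n f 0"
      by (intro eq_at_0_if_steps_eq) auto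
    then show ?thesis using symmetric_fn_eq_sym_profile[OF sym that] by simp
  qed
  then have "NAADT n f = 0" by (intro NAADT_eq_0_if_constant) simp
  then show ?thesis by simp
next
  case False
  then have "\<exists>w. w < n \<and> sym_profile n f w \<noteq> sym_profile n f (Suc w)" by auto
  from exists_least_iff[THEN iffD1, OF this] obtain s
    where s: "s < n" "sym_profile n f s \<noteq> sym_profile n f (Suc s)"
    and least: "\<forall>w<s. \<not> (w < n \<and> sym_profile n f w \<noteq> sym_profile n f (Suc w))"
    by blast
  have earlier: "sym_profile n f w = sym_profile n f (Suc w)" if "w < s" for w
    using least that \<open>s < n\<close> by (meson less_trans)
  have before: "sym_profile n f w = sym_profile n f 0" if "w \<le> s" for w
    using eq_at_0_if_steps_eq[of s "sym_profile n f", OF earlier that] .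
  define d where "d = n - Suc s"
  have bounds: "1 \<le> Dcc_AND n f" "d < 4 * Dcc_AND n f" "n choose d \<le> 2 ^ Dcc_AND n f"
    using Dcc_AND_lower_bounds[OF sym s before] by (simp_all add: d_def)
  obtain Ss where Ss: "disjunct_family n d Ss" "length Ss \<le> 32 * Dcc_AND n f ^ 2"
    using exists_short_disjunct_family[OF bounds] by blast
  have "f x = sym_profile n f 0" if "length x = n" "d < card {i. i < n \<and> \<not> x ! i}" for x
  proof -
    have "count_list x True \<le> s"
      using count_list_True_add_card_False[OF that(1)] that(2) unfolding d_def by linarith
    from before[OF this] show ?thesis using symmetric_fn_eq_sym_profile[OF sym that(1)] by simp
  qed
  then have "NAADT n f \<le> length Ss" using Ss(1) by (rule NAADT_le_disjunct_family)
  then show ?thesis using Ss(2) by linarith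
qed

theorem theorem1p5:
  shows "\<exists>C::real. C > 0 \<and> (\<forall>n (f :: bool list \<Rightarrow> bool). symmetric_fn n f \<longrightarrow>
           real (NAADT n f) \<le> C * (real (Dcc_AND n f))^2)"
proof (intro exI[of _ 32] conjI allI impI)
  fix n and f :: "bool list \<Rightarrow> bool"
  assume "symmetric_fn n f"
  then have "real (NAADT n f) \<le> real (32 * Dcc_AND n f ^ 2)"
    by (simp only: of_nat_le_iff NAADT_le_Dcc_AND_sq)
  then show "real (NAADT n f) \<le> 32 * (real (Dcc_AND n f))^2" by simp
qed simp

end
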